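(* Let $n\ge 1$ and let $\boldsymbol{\gamma}^{[k]}=(\boldsymbol{\alpha}^{[k]},\boldsymbol{\beta}^{[k]})\in\mathscr{W}$, $k\ge 0$, be corner cutting weights such that $\sup_{k\ge 0}\mu(\boldsymbol{\gamma}^{[k]})<1$. Let $\mathbf{P}^{[0]}=\{P^{[0]}_i\in\mathbb{R}^n,\ i\in\mathbb{Z}\}$ be an initial sequence of points for which there is $L>0$ with $\|P^{[0]}_{i+1}-P^{[0]}_i\|_\infty<L$ for all $i\in\mathbb{Z}$, and let $\mathbf{P}^{[k+1]}=CC_{\boldsymbol{\gamma}^{[k]}}(\mathbf{P}^{[k]})$ for $k\ge 0$. Then the corner cutting algorithm converges for $\mathbf{P}^{[0]}$: there exists a continuous function $F:\mathbb{R}\to\mathbb{R}^n$ such that $$\lim_{k\to+\infty}\sup_{i\in\mathbb{Z}}\|F(2^{-k}i)-P^{[k]}_i\|_\infty=0.$$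
   Context: $\mathscr{W}$ is the set of pairs $(\boldsymbol{\alpha},\boldsymbol{\beta})$ of real bi-infinite sequences $\boldsymbol{\alpha}=(\alpha_i)_{i\in\mathbb{Z}}$, $\boldsymbol{\beta}=(\beta_i)_{i\in\mathbb{Z}}$ such that $\inf_{i\in\mathbb{Z}}\min\{\alpha_i,\,1-\beta_i,\,\beta_i-\alpha_i\}>0$. For $\boldsymbol{\gamma}=(\boldsymbol{\alpha},\boldsymbol{\beta})\in\mathscr{W}$, $\mu(\boldsymbol{\gamma}):=\sup_{i\in\mathbb{Z}}\max\{\beta_i-\alpha_i,\ 1-\beta_{i-1}+\alpha_i\}$. The corner cutting operator $CC_{\boldsymbol{\gamma}}$ maps a sequence $\mathbf{P}=(P_i)_{i\in\mathbb{Z}}$ of points of $\mathbb{R}^n$ to the sequence given by $(CC_{\boldsymbol{\gamma}}(\mathbf{P}))_{2i}=(1-\alpha_i)P_i+\alpha_iP_{i+1}$ and $(CC_{\boldsymbol{\gamma}}(\mathbf{P}))_{2i+1}=(1-\beta_i)P_i+\beta_iP_{i+1}$, $i\in\mathbb{Z}$. *)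

theory Defs
  imports "HOL-Analysis.Analysis"
begin

definition cc_weights :: "(int \<Rightarrow> real) \<Rightarrow> (int \<Rightarrow> real) \<Rightarrow> bool" where
  "cc_weights \<alpha> \<beta> \<longleftrightarrow>
     (INF i. min (\<alpha> i) (min (1 - \<beta> i) (\<beta> i - \<alpha> i))) > 0
     \<and> bdd_below (range (\<lambda>i. min (\<alpha> i) (min (1 - \<beta> i) (\<beta> i - \<alpha> i))))"

definition cc_mu :: "(int \<Rightarrow> real) \<Rightarrow> (int \<Rightarrow> real) \<Rightarrow> real" where
  "cc_mu \<alpha> \<beta> = (SUP i. max (\<beta> i - \<alpha> i) (1 - \<beta> (i - 1) + \<alpha> i))"

definition CC :: "(int \<Rightarrow> real) \<Rightarrow> (int \<Rightarrow> real) \<Rightarrow> (int \<Rightarrow> 'a::real_vector) \<Rightarrow> int \<Rightarrow> 'a" where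
  "CC \<alpha> \<beta> P j =
     (if even j then (1 - \<alpha> (j div 2)) *\<^sub>R P (j div 2) + \<alpha> (j div 2) *\<^sub>R P (j div 2 + 1)
      else (1 - \<beta> (j div 2)) *\<^sub>R P (j div 2) + \<beta> (j div 2) *\<^sub>R P (j div 2 + 1))"

end

theory Submission
  imports Defs
begin

text \<open>Interpolate the k-th polygon piecewise linearly on the grid \<open>2\<^sup>-\<^sup>k\<int>\<close>. One corner cutting
  step multiplies the maximal edge length by at most \<open>\<mu> < 1\<close>, so consecutive interpolants differ
  uniformly by \<open>O(\<mu>\<^sup>k)\<close>. They converge uniformly to a continuous limit \<open>F\<close>, which is within
  \<open>O(\<mu>\<^sup>k)\<close> of the k-th interpolant and hence of the k-th polygon at the grid points.\<close>

definition lin_interp :: "(int \<Rightarrow> 'a::real_vector) \<Rightarrow> real \<Rightarrow> 'a" where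
  "lin_interp a t = (1 - frac t) *\<^sub>R a \<lfloor>t\<rfloor> + frac t *\<^sub>R a (\<lfloor>t\<rfloor> + 1)"

lemma lin_interp_of_int [simp]: "lin_interp a (of_int i) = a i"
  by (simp add: lin_interp_def)

lemma continuous_on_lin_interp_unit_interval:
  fixes a :: "int \<Rightarrow> 'a::real_normed_vector"
  shows "continuous_on {of_int m..of_int m + 1} (lin_interp a)"
proof (rule continuous_on_eq)
  show "continuous_on {of_int m..of_int m + 1}
          (\<lambda>t::real. (1 - (t - of_int m)) *\<^sub>R a m + (t - of_int m) *\<^sub>R a (m + 1))"
    by (intro continuous_intros)
  fix t :: real assume t: "t \<in> {of_int m..of_int m + 1}"
  show "(1 - (t - of_int m)) *\<^sub>R a m + (t - of_int m) *\<^sub>R a (m + 1) = lin_interp a t"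
  proof (cases "t = of_int (m + 1)")
    case False
    with t have "\<lfloor>t\<rfloor> = m" by (auto simp: floor_eq_iff)
    then show ?thesis by (simp add: lin_interp_def frac_def)
  qed (use lin_interp_of_int[of a "m + 1"] in simp)
qed

lemma continuous_on_lin_interp:
  fixes a :: "int \<Rightarrow> 'a::real_normed_vector"
  shows "continuous_on UNIV (lin_interp a)"
proof -
  have "isCont (lin_interp a) t" for t
  proof -
    define m where "m = \<lfloor>t\<rfloor>"
    have "{of_int (m - 1)..of_int (m - 1) + 1} \<union> {of_int m..of_int m + 1}
        = {of_int m - 1..of_int m + 1 :: real}"
      by auto
    then have "continuous_on {of_int m - 1..of_int m + 1} (lin_interp a)"
      using continuous_on_closed_Un[OF _ _ continuous_on_lin_interp_unit_interval
          continuous_on_lin_interp_unit_interval] by (metis closed_atLeastAtMost)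
    then have "continuous_on {of_int m - 1<..<of_int m + 1} (lin_interp a)"
      by (rule continuous_on_subset) auto
    moreover have "t \<in> {of_int m - 1<..<of_int m + 1}"
      unfolding m_def by simp linarith
    ultimately show ?thesis
      using continuous_on_eq_continuous_at open_greaterThanLessThan by blast
  qed
  then show ?thesis by (simp add: continuous_at_imp_continuous_on)
qed

lemma norm_lin_interp_minus_floor_le:
  fixes a :: "int \<Rightarrow> 'a::real_normed_vector"
  assumes "\<And>i. norm (a (i + 1) - a i) \<le> D"
  shows "norm (lin_interp a t - a \<lfloor>t\<rfloor>) \<le> D"
proof -
  have "lin_interp a t - a \<lfloor>t\<rfloor> = frac t *\<^sub>R (a (\<lfloor>t\<rfloor> + 1) - a \<lfloor>t\<rfloor>)"
    by (simp add: lin_interp_def algebra_simps)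
  also have "norm \<dots> = frac t * norm (a (\<lfloor>t\<rfloor> + 1) - a \<lfloor>t\<rfloor>)" by simp
  also have "\<dots> \<le> 1 * D"
    using assms[of "\<lfloor>t\<rfloor>"] frac_lt_1[of t]
    by (intro mult_mono) (auto intro: order_trans[OF norm_ge_zero])
  finally show ?thesis by simp
qed

lemma norm_lin_interp_refine_le:
  fixes a b :: "int \<Rightarrow> 'a::real_normed_vector"
  assumes da: "\<And>i. norm (a (i + 1) - a i) \<le> D"
    and db: "\<And>i. norm (b (i + 1) - b i) \<le> D'"
    and b_even: "\<And>i. b (2 * i) = (1 - c i) *\<^sub>R a i + c i *\<^sub>R a (i + 1)"
    and c: "\<And>i. 0 \<le> c i \<and> c i \<le> 1"
  shows "norm (lin_interp b (2 * t) - lin_interp a t) \<le> 2 * D + 2 * D'"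
proof -
  define i where "i = \<lfloor>t\<rfloor>"
  have "\<lfloor>2 * t\<rfloor> = 2 * i \<or> \<lfloor>2 * t\<rfloor> = 2 * i + 1"
    unfolding i_def by (auto simp: floor_eq_iff) linarith
  moreover have "0 \<le> D" using da[of 0] norm_ge_zero order_trans by blast
  ultimately have b_floor: "norm (b \<lfloor>2 * t\<rfloor> - b (2 * i)) \<le> D'"
    using db[of "2 * i"] by (auto simp: norm_minus_commute intro: order_trans[OF norm_ge_zero])
  have "b (2 * i) - a i = c i *\<^sub>R (a (i + 1) - a i)"
    unfolding b_even by (simp add: algebra_simps)
  then have "norm (b (2 * i) - a i) = c i * norm (a (i + 1) - a i)"
    using c[of i] by simp
  also have "\<dots> \<le> 1 * D" using c[of i] da[of i] by (intro mult_mono) auto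
  finally have b_a: "norm (b (2 * i) - a i) \<le> D" by simp
  have "lin_interp b (2 * t) - lin_interp a t = (lin_interp b (2 * t) - b \<lfloor>2 * t\<rfloor>)
      + (b \<lfloor>2 * t\<rfloor> - b (2 * i)) + (b (2 * i) - a i) - (lin_interp a t - a i)"
    by simp
  also have "norm \<dots> \<le> D' + D' + D + D"
    using norm_lin_interp_minus_floor_le[of b D' "2 * t", OF db] b_floor b_a
      norm_lin_interp_minus_floor_le[of a D t, OF da]
    unfolding i_def by (meson add_mono norm_triangle_le norm_triangle_le_diff order_trans)
  finally show ?thesis by simp
qed

lemma cc_weights_bounds:
  assumes "cc_weights \<alpha> \<beta>"
  shows "0 < \<alpha> i" "\<alpha> i < \<beta> i" "\<beta> i < 1"
proof -
  have "(INF i. min (\<alpha> i) (min (1 - \<beta> i) (\<beta> i - \<alpha> i))) \<le> min (\<alpha> i) (min (1 - \<beta> i) (\<beta> i - \<alpha> i))"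
    using assms unfolding cc_weights_def by (intro cINF_lower) auto
  then show "0 < \<alpha> i" "\<alpha> i < \<beta> i" "\<beta> i < 1"
    using assms unfolding cc_weights_def by linarith+
qed

lemma cc_mu_bounds:
  assumes "cc_weights \<alpha> \<beta>"
  shows "max (\<beta> i - \<alpha> i) (1 - \<beta> (i - 1) + \<alpha> i) \<le> cc_mu \<alpha> \<beta>" "0 < cc_mu \<alpha> \<beta>" "cc_mu \<alpha> \<beta> \<le> 2"
proof -
  have le_2: "max (\<beta> j - \<alpha> j) (1 - \<beta> (j - 1) + \<alpha> j) \<le> 2" for j
    using cc_weights_bounds[OF assms, of j] cc_weights_bounds[OF assms, of "j - 1"] by auto
  show "max (\<beta> i - \<alpha> i) (1 - \<beta> (i - 1) + \<alpha> i) \<le> cc_mu \<alpha> \<beta>"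
    unfolding cc_mu_def by (rule cSUP_upper) (auto intro: bdd_aboveI2[OF le_2])
  then show "0 < cc_mu \<alpha> \<beta>"
    using cc_weights_bounds[OF assms, of i] by linarith
  show "cc_mu \<alpha> \<beta> \<le> 2"
    unfolding cc_mu_def using le_2 by (intro cSUP_least) auto
qed

lemma CC_diff_even:
  "CC \<alpha> \<beta> P (2 * m + 1) - CC \<alpha> \<beta> P (2 * m) = (\<beta> m - \<alpha> m) *\<^sub>R (P (m + 1) - P m)"
  by (simp add: CC_def algebra_simps)

lemma CC_diff_odd:
  "CC \<alpha> \<beta> P (2 * m + 1 + 1) - CC \<alpha> \<beta> P (2 * m + 1)
     = (1 - \<beta> m) *\<^sub>R (P (m + 1) - P m) + \<alpha> (m + 1) *\<^sub>R (P (m + 1 + 1) - P (m + 1))"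
proof -
  have "(2 * m + 1 + 1) div 2 = m + 1" "even (2 * m + 1 + 1)" by presburger+
  then show ?thesis by (simp add: CC_def algebra_simps)
qed

lemma norm_CC_diff_le:
  fixes P :: "int \<Rightarrow> 'a::real_normed_vector"
  assumes W: "cc_weights \<alpha> \<beta>" and D: "\<And>i. norm (P (i + 1) - P i) \<le> D"
  shows "norm (CC \<alpha> \<beta> P (j + 1) - CC \<alpha> \<beta> P j) \<le> cc_mu \<alpha> \<beta> * D"
proof (cases "even j")
  case True
  then obtain m where j: "j = 2 * m" by (auto elim: evenE)
  have "norm (CC \<alpha> \<beta> P (j + 1) - CC \<alpha> \<beta> P j) = (\<beta> m - \<alpha> m) * norm (P (m + 1) - P m)"
    unfolding j CC_diff_even using cc_weights_bounds[OF W, of m] by simp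
  also have "\<dots> \<le> cc_mu \<alpha> \<beta> * D"
    using cc_mu_bounds(1)[OF W, of m] cc_weights_bounds[OF W, of m] D[of m]
    by (intro mult_mono) auto
  finally show ?thesis .
next
  case False
  then obtain m where j: "j = 2 * m + 1" by (auto elim: oddE)
  have "norm (CC \<alpha> \<beta> P (j + 1) - CC \<alpha> \<beta> P j)
      \<le> (1 - \<beta> m) * norm (P (m + 1) - P m) + \<alpha> (m + 1) * norm (P (m + 1 + 1) - P (m + 1))"
    unfolding j CC_diff_odd using cc_weights_bounds[OF W, of m] cc_weights_bounds[OF W, of "m + 1"]
    by (metis norm_triangle_ineq norm_scaleR abs_of_nonneg less_imp_le diff_ge_0_iff_ge)
  also have "\<dots> \<le> (1 - \<beta> m) * D + \<alpha> (m + 1) * D"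
    using cc_weights_bounds[OF W, of m] cc_weights_bounds[OF W, of "m + 1"] D[of m] D[of "m + 1"]
    by (intro add_mono mult_left_mono) auto
  also have "\<dots> = (1 - \<beta> (m + 1 - 1) + \<alpha> (m + 1)) * D"
    by (simp add: algebra_simps)
  also have "\<dots> \<le> cc_mu \<alpha> \<beta> * D"
    using cc_mu_bounds(1)[OF W, of "m + 1"] order_trans[OF norm_ge_zero D]
    by (intro mult_right_mono) auto
  finally show ?thesis .
qed

lemma norm_CC_iterate_diff_le:
  fixes P :: "nat \<Rightarrow> int \<Rightarrow> 'a::real_normed_vector"
  assumes W: "\<And>k. cc_weights (\<alpha> k) (\<beta> k)" and mu: "\<And>k. cc_mu (\<alpha> k) (\<beta> k) \<le> \<mu>"
    and step: "\<And>k. P (Suc k) = CC (\<alpha> k) (\<beta> k) (P k)"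
    and init: "\<And>i. norm (P 0 (i + 1) - P 0 i) \<le> L"
  shows "norm (P k (i + 1) - P k i) \<le> L * \<mu> ^ k"
proof (induction k arbitrary: i)
  case (Suc k)
  have "norm (P (Suc k) (i + 1) - P (Suc k) i) \<le> cc_mu (\<alpha> k) (\<beta> k) * (L * \<mu> ^ k)"
    unfolding step by (rule norm_CC_diff_le[of _ _ "P k", OF W Suc])
  also have "\<dots> \<le> \<mu> * (L * \<mu> ^ k)"
    using mu[of k] order_trans[OF norm_ge_zero Suc] by (rule mult_right_mono)
  finally show ?case by (simp add: mult_ac)
qed (simp add: init)

lemma norm_lin_interp_CC_le:
  fixes P :: "int \<Rightarrow> 'a::real_normed_vector"
  assumes W: "cc_weights \<alpha> \<beta>" and D: "\<And>i. norm (P (i + 1) - P i) \<le> D"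
  shows "norm (lin_interp (CC \<alpha> \<beta> P) (2 * t) - lin_interp P t) \<le> 2 * (1 + cc_mu \<alpha> \<beta>) * D"
proof -
  have "norm (lin_interp (CC \<alpha> \<beta> P) (2 * t) - lin_interp P t) \<le> 2 * D + 2 * (cc_mu \<alpha> \<beta> * D)"
  proof (rule norm_lin_interp_refine_le[where a = P and b = "CC \<alpha> \<beta> P",
        OF D norm_CC_diff_le[where P = P, OF W D]])
    show "CC \<alpha> \<beta> P (2 * i) = (1 - \<alpha> i) *\<^sub>R P i + \<alpha> i *\<^sub>R P (i + 1)" for i
      by (simp add: CC_def)
    show "0 \<le> \<alpha> i \<and> \<alpha> i \<le> 1" for i
      using cc_weights_bounds[OF W, of i] by auto
  qed
  then show ?thesis by (simp add: algebra_simps)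
qed

lemma continuous_limit_of_geometric_steps:
  fixes f :: "nat \<Rightarrow> 'a::topological_space \<Rightarrow> 'b::banach"
  assumes cont: "\<And>k. continuous_on S (f k)"
    and steps: "\<And>k x. x \<in> S \<Longrightarrow> norm (f (Suc k) x - f k x) \<le> C * q ^ k"
    and q: "0 \<le> q" "q < 1"
  obtains F where "continuous_on S F" "\<And>k x. x \<in> S \<Longrightarrow> norm (F x - f k x) \<le> C * q ^ k / (1 - q)"
proof
  define g where "g k x = f (Suc k) x - f k x" for k x
  define F where "F x = f 0 x + (\<Sum>k. g k x)" for x
  have summable_steps: "summable (\<lambda>k. C * q ^ k)"
    using q by (intro summable_mult summable_geometric) auto
  have "uniform_limit S (\<lambda>n x. \<Sum>k<n. g k x) (\<lambda>x. \<Sum>k. g k x) sequentially"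
    using steps unfolding g_def by (intro Weierstrass_m_test[OF _ summable_steps])
  then have "continuous_on S (\<lambda>x. \<Sum>k. g k x)"
    by (rule uniform_limit_theorem[rotated])
       (auto intro!: always_eventually continuous_on_sum continuous_on_diff cont simp: g_def)
  then show "continuous_on S F"
    unfolding F_def by (intro continuous_on_add cont)
  fix k x assume x: "x \<in> S"
  have summable_g: "summable (\<lambda>k. g k x)"
    using steps[OF x] unfolding g_def
    by (intro summable_comparison_test[OF _ summable_steps]) auto
  have "F x - f k x = (\<Sum>i. g (i + k) x)"
    using suminf_split_initial_segment[OF summable_g, of k] sum_lessThan_telescope[of "\<lambda>k. f k x" k]
    unfolding F_def g_def by (simp add: algebra_simps)
  also have "norm \<dots> \<le> (\<Sum>i. C * q ^ k * q ^ i)"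
    using q steps[OF x, of "_ + k"] unfolding g_def
    by (intro norm_suminf_le summable_mult summable_geometric) (auto simp: power_add mult_ac)
  also have "\<dots> = C * q ^ k / (1 - q)"
    using q by (simp add: suminf_mult suminf_geometric summable_geometric divide_simps)
  finally show "norm (F x - f k x) \<le> C * q ^ k / (1 - q)" .
qed

lemma SUP_ereal_tendsto_zero:
  assumes "\<And>k i. 0 \<le> a k i" "\<And>k i. a k i \<le> T k" "T \<longlonglongrightarrow> 0"
  shows "(\<lambda>k. SUP i. ereal (a k i)) \<longlonglongrightarrow> 0"
proof (rule tendsto_sandwich[of "\<lambda>_. 0" _ _ "\<lambda>k. ereal (T k)"])
  show "\<forall>\<^sub>F k in sequentially. 0 \<le> (SUP i. ereal (a k i))"
    using assms(1) by (intro always_eventually allI SUP_upper2) auto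
  show "\<forall>\<^sub>F k in sequentially. (SUP i. ereal (a k i)) \<le> ereal (T k)"
    using assms(2) by (intro always_eventually allI SUP_least) auto
  show "(\<lambda>k. ereal (T k)) \<longlonglongrightarrow> 0"
    using assms(3) by (simp add: zero_ereal_def)
qed simp

theorem theorem1:
  fixes \<alpha> \<beta> :: "nat \<Rightarrow> int \<Rightarrow> real"
    and P :: "nat \<Rightarrow> int \<Rightarrow> real ^ 'n"
  assumes W: "\<And>k. cc_weights (\<alpha> k) (\<beta> k)"
    and mu: "(SUP k. cc_mu (\<alpha> k) (\<beta> k)) < 1"
    and init: "\<exists>L>0. \<forall>i. infnorm (P 0 (i + 1) - P 0 i) < L"
    and step: "\<And>k. P (Suc k) = CC (\<alpha> k) (\<beta> k) (P k)"
  shows "\<exists>F :: real \<Rightarrow> real ^ 'n. continuous_on UNIV F \<and>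
           (\<lambda>k. SUP i. ereal (infnorm (F (real_of_int i / 2 ^ k) - P k i))) \<longlonglongrightarrow> 0"
proof -
  obtain L0 where L0: "\<And>i. infnorm (P 0 (i + 1) - P 0 i) < L0" using init by blast
  define L where "L = sqrt DIM(real ^ 'n) * L0"
  define \<mu> where "\<mu> = (SUP k. cc_mu (\<alpha> k) (\<beta> k))"
  have mu_k: "cc_mu (\<alpha> k) (\<beta> k) \<le> \<mu>" for k
    unfolding \<mu>_def using cc_mu_bounds(3)[OF W] by (intro cSUP_upper bdd_aboveI2) auto
  have "\<mu> < 1" using mu unfolding \<mu>_def .
  have "0 \<le> \<mu>" using mu_k[of 0] cc_mu_bounds(2)[OF W] by (meson less_le_trans less_imp_le)
  have "norm (P 0 (i + 1) - P 0 i) \<le> L" for i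
    using norm_le_infnorm[of "P 0 (i + 1) - P 0 i"] L0[of i] unfolding L_def
    by (simp add: order_trans mult_left_mono)
  then have edges: "norm (P k (i + 1) - P k i) \<le> L * \<mu> ^ k" for k i
    by (rule norm_CC_iterate_diff_le[where P = P, OF W mu_k step])
  define f where "f k x = lin_interp (P k) (2 ^ k * x)" for k x
  have cont_f: "continuous_on UNIV (f k)" for k
    unfolding f_def
    by (intro continuous_on_compose2[OF continuous_on_lin_interp] continuous_intros) auto
  have steps_f: "norm (f (Suc k) x - f k x) \<le> 4 * L * \<mu> ^ k" for k x
  proof -
    have "norm (f (Suc k) x - f k x) \<le> 2 * (1 + cc_mu (\<alpha> k) (\<beta> k)) * (L * \<mu> ^ k)"
      using norm_lin_interp_CC_le[where P = "P k" and t = "2 ^ k * x", OF W edges]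
      by (simp add: f_def step mult.assoc)
    also have "\<dots> \<le> 2 * (1 + 1) * (L * \<mu> ^ k)"
      using mu_k[of k] \<open>\<mu> < 1\<close> order_trans[OF norm_ge_zero edges] by (intro mult_right_mono) auto
    finally show ?thesis by simp
  qed
  obtain F where F: "continuous_on UNIV F"
    and F_close: "\<And>k x. norm (F x - f k x) \<le> 4 * L * \<mu> ^ k / (1 - \<mu>)"
    by (rule continuous_limit_of_geometric_steps[of UNIV f "4 * L" \<mu>])
       (use cont_f steps_f \<open>0 \<le> \<mu>\<close> \<open>\<mu> < 1\<close> in auto)
  have "infnorm (F (real_of_int i / 2 ^ k) - P k i) \<le> 4 * L * \<mu> ^ k / (1 - \<mu>)" for k i
    using order_trans[OF infnorm_le_norm F_close[of "real_of_int i / 2 ^ k" k]]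
    by (simp add: f_def)
  moreover have "(\<lambda>k. 4 * L * \<mu> ^ k / (1 - \<mu>)) \<longlonglongrightarrow> 0"
    using \<open>0 \<le> \<mu>\<close> \<open>\<mu> < 1\<close>
    by (intro tendsto_divide_zero tendsto_mult_right_zero LIMSEQ_power_zero) auto
  ultimately show ?thesis
    using F by (intro exI conjI SUP_ereal_tendsto_zero infnorm_pos_le)
qed

end
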